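(* Let $\kappa$ be a regular uncountable cardinal. Then there exists a totally disconnected compactum $X$ such that $Nt(X)=\kappa$ and $X$ has a $P_\kappa$-point.
   Context: A compactum is a compact Hausdorff space. Families of open sets are ordered by inclusion; a family is $\mu^{\mathrm{op}}$-like if no member is contained in $\mu$-many members; $Nt(X)$ is the least $\mu\geq\omega$ such that $X$ has a $\mu^{\mathrm{op}}$-like base. A point $p\in X$ is a $P_\kappa$-point if for every family $\mathcal{A}$ of fewer than $\kappa$ neighborhoods of $p$, $p$ lies in the interior of $\bigcap\mathcal{A}$. *)

theory Defs
  imports "HOL-Analysis.Analysis"
begin

unbundle cardinal_syntax

definition compactum :: "'a topology \<Rightarrow> bool" where
  "compactum X \<longleftrightarrow> compact_space X \<and> Hausdorff_space X"

definition totally_disconnected_space :: "'a topology \<Rightarrow> bool" where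
  "totally_disconnected_space X \<longleftrightarrow>
     (\<forall>S. S \<subseteq> topspace X \<and> connectedin X S \<longrightarrow> (\<forall>x\<in>S. \<forall>y\<in>S. x = y))"

definition is_base :: "'a topology \<Rightarrow> 'a set set \<Rightarrow> bool" where
  "is_base X \<B> \<longleftrightarrow> (\<forall>U\<in>\<B>. openin X U) \<and>
     (\<forall>U. openin X U \<longrightarrow> (\<exists>\<U>. \<U> \<subseteq> \<B> \<and> \<Union>\<U> = U))"

text \<open>A family is \<open>\<mu>\<^sup>o\<^sup>p\<close>-like (the cardinal \<open>\<mu>\<close> given as the cardinality of a set M):
  no member is contained in \<open>\<mu>\<close>-many members, i.e. the set of members containing
  any given member has cardinality strictly less than \<open>\<mu>\<close>.\<close>
definition op_like :: "'b set \<Rightarrow> 'a set set \<Rightarrow> bool" where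
  "op_like M \<F> \<longleftrightarrow> (\<forall>U\<in>\<F>. card_of {V\<in>\<F>. U \<subseteq> V} <o card_of M)"

definition has_op_like_base :: "'b set \<Rightarrow> 'a topology \<Rightarrow> bool" where
  "has_op_like_base M X \<longleftrightarrow> (\<exists>\<B>. is_base X \<B> \<and> op_like M \<B>)"

text \<open>\<open>Nt(X) = |K|\<close> for an infinite set K: X has a \<open>|K|\<^sup>o\<^sup>p\<close>-like base, and no
  \<open>\<mu>\<^sup>o\<^sup>p\<close>-like base for any infinite cardinal \<open>\<mu> < |K|\<close> (every such \<open>\<mu>\<close> is the
  cardinality of a subset of K).\<close>
definition Nt_eq :: "'a topology \<Rightarrow> 'k set \<Rightarrow> bool" where
  "Nt_eq X K \<longleftrightarrow> infinite K \<and> has_op_like_base K X \<and>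
     (\<forall>M. M \<subseteq> K \<and> infinite M \<and> |M| <o |K| \<longrightarrow> \<not> has_op_like_base M X)"

definition P_point :: "'k set \<Rightarrow> 'a topology \<Rightarrow> 'a \<Rightarrow> bool" where
  "P_point K X p \<longleftrightarrow> p \<in> topspace X \<and>
     (\<forall>\<A>. |\<A>| <o |K| \<and> (\<forall>N\<in>\<A>. p \<in> X interior_of N) \<longrightarrow> p \<in> X interior_of (\<Inter>\<A>))"

end

theory Submission
  imports Defs
begin

text \<open>
  The witness is the space of pairs \<open>D \<subseteq> E\<close> of subsets of \<open>\<kappa>\<close> with \<open>D\<close> an initial segment,
  embedded by characteristic functions as a closed subset of the Cantor cube \<open>2\<^sup>\<kappa> \<times> 2\<^sup>\<kappa>\<close>; so it is
  a totally disconnected compactum. The point \<open>p = (\<kappa>, \<kappa>)\<close> has the tails \<open>{(D, E). \<alpha> \<in> D}\<close> as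
  a neighbourhood base, and by regularity fewer than \<open>\<kappa>\<close> of them always contain a common tail, so
  \<open>p\<close> is a \<open>P\<^sub>\<kappa>\<close>-point. A non-isolated \<open>P\<^sub>\<kappa>\<close>-point of a \<open>T\<^sub>1\<close> space rules out \<open>\<mu>\<^sup>o\<^sup>p\<close>-like bases
  for \<open>\<mu> < \<kappa>\<close>: some basic neighbourhood of \<open>p\<close> lies inside \<open>\<mu>\<close> others. Conversely the tails
  together with the finitely determined boxes that exclude one ordinal \<open>\<beta>\<close> from \<open>D\<close> form a
  \<open>\<kappa>\<^sup>o\<^sup>p\<close>-like base: the basic sets containing a given box have all their finitely many parameters
  in a set of size \<open>< \<kappa>\<close>.
\<close>

section \<open>General topology\<close>

lemma homeomorphic_map_pullback_topology:
  assumes "inj_on f A" "f ` A \<subseteq> topspace T"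
  shows "homeomorphic_map (pullback_topology A f T) (subtopology T (f ` A)) f"
proof (rule bijective_open_imp_homeomorphic_map)
  show "continuous_map (pullback_topology A f T) (subtopology T (f ` A)) f"
    using continuous_map_pullback[OF continuous_map_id, of A f]
    by (auto simp: continuous_map_in_subtopology topspace_pullback_topology)
  show "open_map (pullback_topology A f T) (subtopology T (f ` A)) f"
    unfolding open_map_def openin_pullback_topology openin_subtopology by blast
qed (use assms in \<open>auto simp: topspace_pullback_topology intro: inj_on_subset\<close>)

lemma totally_disconnected_space_if_clopen_separated:
  assumes "\<And>x y. \<lbrakk>x \<in> topspace X; y \<in> topspace X; x \<noteq> y\<rbrakk>
             \<Longrightarrow> \<exists>U. openin X U \<and> openin X (topspace X - U) \<and> x \<in> U \<and> y \<notin> U"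
  shows "totally_disconnected_space X"
  unfolding totally_disconnected_space_def
proof (intro allI impI ballI)
  fix S x y assume S: "S \<subseteq> topspace X \<and> connectedin X S" and "x \<in> S" "y \<in> S"
  show "x = y"
  proof (rule ccontr)
    assume "x \<noteq> y"
    then obtain U where "openin X U" "openin X (topspace X - U)" "x \<in> U" "y \<notin> U"
      using assms S \<open>x \<in> S\<close> \<open>y \<in> S\<close> by blast
    then show False
      using connectedinD[of X S U "topspace X - U"] S \<open>x \<in> S\<close> \<open>y \<in> S\<close> by blast
  qed
qed

lemma P_pointD:
  assumes "P_point K X p" "|\<A>| <o |K|" "\<And>N. N \<in> \<A> \<Longrightarrow> p \<in> X interior_of N"
  shows "p \<in> X interior_of \<Inter>\<A>"
  using assms unfolding P_point_def by (auto simp del: Inter_iff)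

lemma is_base_openin: "is_base X \<B> \<Longrightarrow> W \<in> \<B> \<Longrightarrow> openin X W"
  unfolding is_base_def by blast

lemma is_base_local:
  assumes "is_base X \<B>" "openin X U" "x \<in> U"
  obtains W where "W \<in> \<B>" "x \<in> W" "W \<subseteq> U"
proof -
  obtain \<U> where "\<U> \<subseteq> \<B>" "\<Union>\<U> = U" using assms(1,2) unfolding is_base_def by blast
  then show ?thesis using that assms(3) by blast
qed

lemma P_point_Inter_basic_nbhds:
  assumes "P_point K X p" "is_base X \<B>" "|\<A>| <o |K|" "\<A> \<subseteq> {W \<in> \<B>. p \<in> W}"
  shows "p \<in> X interior_of \<Inter>\<A>"
proof (rule P_pointD[OF assms(1,3)])
  fix W assume "W \<in> \<A>"
  then have "W \<in> \<B>" "p \<in> W" using assms(4) by auto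
  then show "p \<in> X interior_of W" using interior_of_openin[OF is_base_openin[OF assms(2)]] by simp
qed

text \<open>If there were fewer than \<open>\<kappa>\<close> basic neighbourhoods of \<open>p\<close>, their intersection would be a
  neighbourhood of \<open>p\<close> inside every neighbourhood of \<open>p\<close>, hence equal to \<open>{p}\<close> in a \<open>T\<^sub>1\<close> space.\<close>

lemma P_point_card_basic_nbhds:
  assumes "t1_space X" "P_point K X p" "\<not> openin X {p}" "is_base X \<B>"
  shows "|K| \<le>o |{W \<in> \<B>. p \<in> W}|"
proof (rule not_ordLess_iff_ordLeq[OF card_of_Well_order card_of_Well_order, THEN iffD1], rule notI)
  define \<B>p where "\<B>p = {W \<in> \<B>. p \<in> W}"
  assume "|{W \<in> \<B>. p \<in> W}| <o |K|"
  then have "p \<in> X interior_of \<Inter>\<B>p"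
    using P_point_Inter_basic_nbhds[OF assms(2,4)] unfolding \<B>p_def by blast
  moreover have "X interior_of \<Inter>\<B>p \<noteq> {p}"
  proof
    assume "X interior_of \<Inter>\<B>p = {p}"
    then have "openin X {p}" using openin_interior_of[of X "\<Inter>\<B>p"] by simp
    with assms(3) show False by contradiction
  qed
  ultimately obtain q where q: "q \<in> X interior_of \<Inter>\<B>p" "q \<noteq> p"
    by blast
  have "q \<in> topspace X" using interior_of_subset_topspace q(1) by (rule subsetD)
  then have "openin X (topspace X - {q})"
    using t1_space_openin_delete[THEN iffD1, OF assms(1)] by simp
  moreover have "p \<in> topspace X - {q}"
    using assms(2) q(2) unfolding P_point_def by simp
  ultimately obtain W where W: "W \<in> \<B>" "p \<in> W" "W \<subseteq> topspace X - {q}"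
    by (rule is_base_local[OF assms(4)])
  have "q \<in> \<Inter>\<B>p" using interior_of_subset q(1) by (rule subsetD)
  moreover have "W \<in> \<B>p" unfolding \<B>p_def using W(1,2) by simp
  ultimately have "q \<in> W" by (rule InterD)
  then show False using W(3) by blast
qed

text \<open>Pick \<open>|M|\<close> basic neighbourhoods of \<open>p\<close>; as a \<open>P\<^sub>\<kappa>\<close>-point, \<open>p\<close> has a basic neighbourhood
  inside all of them.\<close>

lemma P_point_imp_no_small_op_like_base:
  assumes "t1_space X" "P_point K X p" "\<not> openin X {p}" "|M| <o |K|"
  shows "\<not> has_op_like_base M X"
proof
  assume "has_op_like_base M X"
  then obtain \<B> where base: "is_base X \<B>" and op: "op_like M \<B>"
    unfolding has_op_like_base_def by blast
  have "|M| \<le>o |{W \<in> \<B>. p \<in> W}|"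
    using assms(4) P_point_card_basic_nbhds[OF assms(1-3) base] ordLess_imp_ordLeq ordLeq_transitive
    by blast
  from card_of_ordLeq[THEN iffD2, OF this]
  obtain f where f: "inj_on f M" "f ` M \<subseteq> {W \<in> \<B>. p \<in> W}" by blast
  define \<A> where "\<A> = f ` M"
  have "|M| =o |\<A>|" unfolding \<A>_def
    by (rule card_of_ordIso[THEN iffD1]) (rule exI, rule inj_on_imp_bij_betw[OF f(1)])
  then have \<A>: "|\<A>| =o |M|" by (rule ordIso_symmetric)
  have "|\<A>| <o |K|" using \<A> assms(4) by (rule ordIso_ordLess_trans)
  then have "p \<in> X interior_of \<Inter>\<A>"
    using P_point_Inter_basic_nbhds[OF assms(2) base] f(2) unfolding \<A>_def by blast
  then obtain W where W: "W \<in> \<B>" "W \<subseteq> X interior_of \<Inter>\<A>"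
    using is_base_local[OF base openin_interior_of] by blast
  have "\<A> \<subseteq> {V \<in> \<B>. W \<subseteq> V}"
  proof
    fix V assume "V \<in> \<A>"
    then have "V \<in> \<B>" using f(2) unfolding \<A>_def by blast
    have "W \<subseteq> V"
      using W(2) interior_of_subset Inter_lower[OF \<open>V \<in> \<A>\<close>] by (rule subset_trans[THEN subset_trans])
    then show "V \<in> {V \<in> \<B>. W \<subseteq> V}" using \<open>V \<in> \<B>\<close> by blast
  qed
  then have "|\<A>| \<le>o |{V \<in> \<B>. W \<subseteq> V}|" by (rule card_of_mono1)
  moreover have "|{V \<in> \<B>. W \<subseteq> V}| <o |M|" using op W(1) unfolding op_like_def by blast
  ultimately show False
    using \<A> not_ordLess_ordIso ordLeq_ordLess_trans by blast
qed

section \<open>The Cantor cube\<close>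

definition cantor_cube :: "('a \<Rightarrow> bool) topology" where
  "cantor_cube = product_topology (\<lambda>_. discrete_topology UNIV) UNIV"

lemma topspace_cantor_cube [simp]: "topspace cantor_cube = UNIV"
  unfolding cantor_cube_def by (simp add: PiE_UNIV_domain)

lemma compact_space_cantor_cube: "compact_space cantor_cube"
  unfolding cantor_cube_def
  by (simp add: compact_space_product_topology compact_space_discrete_topology)

lemma Hausdorff_space_cantor_cube: "Hausdorff_space cantor_cube"
  unfolding cantor_cube_def by (simp add: Hausdorff_space_product_topology)

lemma openin_cantor_cube_conditions:
  assumes "finite I" "finite J"
  shows "openin cantor_cube {d. (\<forall>i\<in>I. d i) \<and> (\<forall>j\<in>J. \<not> d j)}"
proof -
  define W where "W i = (if i \<in> I then {True} else UNIV) \<inter> (if i \<in> J then {False} else UNIV)" for i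
  have W_iff: "d i \<in> W i \<longleftrightarrow> (i \<in> I \<longrightarrow> d i) \<and> (i \<in> J \<longrightarrow> \<not> d i)" for d i
    by (auto simp: W_def)
  have "{d. (\<forall>i\<in>I. d i) \<and> (\<forall>j\<in>J. \<not> d j)} = (\<Pi>\<^sub>E i\<in>UNIV. W i)"
    by (auto simp: PiE_iff W_iff)
  moreover have "finite {i. W i \<noteq> UNIV}"
    by (rule finite_subset[of _ "I \<union> J"]) (auto simp: W_def assms)
  then have "openin cantor_cube (\<Pi>\<^sub>E i\<in>UNIV. W i)"
    unfolding cantor_cube_def by (intro product_topology_basis) auto
  ultimately show ?thesis by simp
qed

lemma openin_cantor_cube_contains_cylinder:
  assumes "openin cantor_cube U" "d \<in> U"
  shows "\<exists>I. finite I \<and> (\<forall>d'. (\<forall>i\<in>I. d' i = d i) \<longrightarrow> d' \<in> U)"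
proof -
  obtain W where W: "d \<in> (\<Pi>\<^sub>E i\<in>UNIV. W i)" "finite {i. W i \<noteq> UNIV}"
      "(\<Pi>\<^sub>E i\<in>UNIV. W i) \<subseteq> U"
    using product_topology_open_contains_basis[OF assms[unfolded cantor_cube_def]] by auto
  have "d' \<in> U" if "\<forall>i\<in>{i. W i \<noteq> UNIV}. d' i = d i" for d'
  proof -
    have "d' i \<in> W i" for i
      using that W(1) by (cases "W i = UNIV") (auto simp: PiE_iff)
    then show ?thesis using W(3) by (auto simp: PiE_iff)
  qed
  then show ?thesis using W(2) by blast
qed

section \<open>Ordinals below a regular uncountable cardinal\<close>

text \<open>\<open>r\<close> is the initial well-order of \<open>'k\<close>, of order type \<open>\<kappa>\<close>; the elements of \<open>'k\<close> play the role
  of the ordinals below \<open>\<kappa>\<close>.\<close>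

locale regular_uncountable_type =
  fixes r :: "'k rel"
  assumes r_def: "r = |UNIV :: 'k set|"
    and regular: "regularCard r"
    and uncountable: "\<not> countable (UNIV :: 'k set)"
begin

abbreviation le_r :: "'k \<Rightarrow> 'k \<Rightarrow> bool" (infix "\<preceq>" 50) where
  "a \<preceq> b \<equiv> (a, b) \<in> r"

lemma Card_order_r: "Card_order r"
  unfolding r_def by (rule card_of_Card_order)

lemma Well_order_r: "Well_order r"
  unfolding r_def by (rule card_of_Well_order)

lemma wo_rel_r: "wo_rel r"
  unfolding wo_rel_def by (rule Well_order_r)

lemma Field_r [simp]: "Field r = UNIV"
  unfolding r_def by (rule Field_card_of)

lemma infinite_UNIV: "infinite (UNIV :: 'k set)"
  using uncountable countable_finite by blast

lemma le_r_refl [simp]: "a \<preceq> a"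
  using wo_rel.REFL[OF wo_rel_r] by (simp add: refl_on_def)

lemma le_r_trans: "a \<preceq> b \<Longrightarrow> b \<preceq> c \<Longrightarrow> a \<preceq> c"
  using wo_rel.TRANS[OF wo_rel_r] unfolding trans_def by blast

lemma le_r_antisym: "a \<preceq> b \<Longrightarrow> b \<preceq> a \<Longrightarrow> a = b"
  using wo_rel.ANTISYM[OF wo_rel_r] unfolding antisym_def by blast

lemma le_r_total: "a \<preceq> b \<or> b \<preceq> a"
  using wo_rel.TOTALS[OF wo_rel_r] by simp

lemma card_less_bounded:
  assumes "|A| <o r"
  shows "\<exists>a. \<forall>b\<in>A. b \<preceq> a"
proof -
  have "\<not> cofinal A r"
  proof
    assume "cofinal A r"
    then have "|A| =o r" using regular unfolding regularCard_def by auto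
    with assms show False using not_ordLess_ordIso by blast
  qed
  then obtain a where a: "\<forall>b\<in>A. a = b \<or> \<not> a \<preceq> b" unfolding cofinal_def by auto
  have "b \<preceq> a" if "b \<in> A" for b
    using a that le_r_total[of a b] by auto
  then show ?thesis by blast
qed

lemma card_less_finite: "finite A \<Longrightarrow> |A| <o r"
  using finite_ordLess_infinite[OF card_of_Well_order Well_order_r] infinite_UNIV
  by (simp add: Field_card_of)

lemma card_less_subset: "A \<subseteq> B \<Longrightarrow> |B| <o r \<Longrightarrow> |A| <o r"
  using card_of_mono1 ordLeq_ordLess_trans by blast

lemma card_less_image: "|A| <o r \<Longrightarrow> |f ` A| <o r"
  using card_of_image ordLeq_ordLess_trans by blast

lemma card_less_Un: "|A| <o r \<Longrightarrow> |B| <o r \<Longrightarrow> |A \<union> B| <o r"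
  using card_of_Un_ordLess_infinite_Field[OF _ Card_order_r] infinite_UNIV by simp

lemma stable_r: "stable r"
  using regularCard_stable[OF Card_order_r _ regular] infinite_UNIV by simp

lemma card_less_Times: "|A| <o r \<Longrightarrow> |B| <o r \<Longrightarrow> |A \<times> B| <o r"
  using stable_elim[OF stable_r, of A "\<lambda>_. B"] by simp

lemma card_less_UN: "|I| <o r \<Longrightarrow> (\<And>i. i \<in> I \<Longrightarrow> |F i| <o r) \<Longrightarrow> |\<Union>i\<in>I. F i| <o r"
  using stable_UNION[OF stable_r] by blast

lemma card_less_under: "|under r a| <o r"
proof -
  have "under r a = insert a (underS r a)" unfolding under_def underS_def by auto
  then show ?thesis
    using card_less_Un[OF card_less_finite[of "{a}"] card_of_underS[OF Card_order_r]] by simp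
qed

lemma card_nat_less: "|UNIV :: nat set| <o r"
proof -
  have "\<not> r \<le>o |UNIV :: nat set|"
  proof
    assume "r \<le>o |UNIV :: nat set|"
    then obtain f :: "'k \<Rightarrow> nat" where "inj f"
      using card_of_ordLeq[of "UNIV :: 'k set" "UNIV :: nat set"] unfolding r_def by auto
    then show False using uncountable unfolding countable_def by blast
  qed
  then show ?thesis by (rule not_ordLeq_iff_ordLess[OF card_of_Well_order Well_order_r, THEN iffD1])
qed

lemma card_less_Fpow:
  assumes "|S| <o r" shows "|Fpow S| <o r"
proof -
  define L where "L n = {xs. length xs = n \<and> set xs \<subseteq> S}" for n
  have L: "|L n| <o r" for n
  proof (induction n)
    case 0
    have "L 0 = {[]}" unfolding L_def by auto
    then show ?case using card_less_finite[of "{[]}"] by simp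
  next
    case (Suc n)
    have "L (Suc n) \<subseteq> (\<lambda>(x, xs). x # xs) ` (S \<times> L n)"
      unfolding L_def by (auto simp: length_Suc_conv image_iff)
    then show ?case by (rule card_less_subset[OF _ card_less_image[OF card_less_Times[OF assms Suc]]])
  qed
  have "Fpow S \<subseteq> set ` (\<Union>n. L n)"
  proof
    fix A assume "A \<in> Fpow S"
    then obtain xs where "set xs = A" "set xs \<subseteq> S" using finite_list unfolding Fpow_def by auto
    then show "A \<in> set ` (\<Union>n. L n)" unfolding L_def by auto
  qed
  moreover have "|\<Union>n. L n| <o r" using card_less_UN[OF card_nat_less L] .
  ultimately show ?thesis by (rule card_less_subset[OF _ card_less_image])
qed

lemma exists_greater: "\<exists>b. a \<preceq> b \<and> b \<noteq> a"
proof -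
  have "under r a \<noteq> UNIV"
  proof
    assume "under r a = UNIV"
    then have "r <o r" using card_less_under[of a] unfolding r_def by simp
    then show False using ordLess_irreflexive by blast
  qed
  then obtain b where "\<not> b \<preceq> a" unfolding under_def by auto
  then show ?thesis using le_r_total by blast
qed

section \<open>The space of cuts\<close>

lemma ofilter_r_iff: "ofilter r D \<longleftrightarrow> (\<forall>a b. b \<in> D \<longrightarrow> a \<preceq> b \<longrightarrow> a \<in> D)"
  unfolding ofilter_def under_def by auto

lemma ofilter_r_downward: "ofilter r D \<Longrightarrow> b \<in> D \<Longrightarrow> a \<preceq> b \<Longrightarrow> a \<in> D"
  unfolding ofilter_r_iff by blast

lemma ofilter_under_r: "ofilter r (under r a)"
  unfolding ofilter_r_iff under_def using le_r_trans by blast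

text \<open>A pair \<open>D \<subseteq> E\<close> is encoded as the set \<open>{D, E}\<close>, from which \<open>\<Inter>\<close> and \<open>\<Union>\<close> recover
  \<open>D\<close> and \<open>E\<close>.\<close>

definition cut_points :: "'k set set set" where
  "cut_points = {{D, E} | D E. D \<subseteq> E \<and> ofilter r D}"

definition cut_code :: "'k set set \<Rightarrow> ('k \<Rightarrow> bool) \<times> ('k \<Rightarrow> bool)" where
  "cut_code S = ((\<lambda>a. a \<in> \<Inter>S), (\<lambda>a. a \<in> \<Union>S))"

definition cut_space :: "'k set set topology" where
  "cut_space = pullback_topology cut_points cut_code (prod_topology cantor_cube cantor_cube)"

definition box :: "'k set \<Rightarrow> 'k set \<Rightarrow> 'k set \<Rightarrow> 'k set \<Rightarrow> 'k set set set" where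
  "box A B F G = {S \<in> cut_points.
     (\<forall>a\<in>A. a \<in> \<Inter>S) \<and> (\<forall>b\<in>B. b \<notin> \<Inter>S) \<and> (\<forall>f\<in>F. f \<in> \<Union>S) \<and> (\<forall>g\<in>G. g \<notin> \<Union>S)}"

lemma mem_box_iff:
  "S \<in> box A B F G \<longleftrightarrow> S \<in> cut_points \<and>
     (\<forall>a\<in>A. a \<in> \<Inter>S) \<and> (\<forall>b\<in>B. b \<notin> \<Inter>S) \<and> (\<forall>f\<in>F. f \<in> \<Union>S) \<and> (\<forall>g\<in>G. g \<notin> \<Union>S)"
  unfolding box_def by (simp del: Inter_iff Union_iff)

lemma doubleton_in_cut_points: "D \<subseteq> E \<Longrightarrow> ofilter r D \<Longrightarrow> {D, E} \<in> cut_points"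
  unfolding cut_points_def by blast

lemma cut_pointsD:
  assumes "S \<in> cut_points"
  shows "ofilter r (\<Inter>S)" "\<Inter>S \<subseteq> \<Union>S" "S = {\<Inter>S, \<Union>S}"
proof -
  obtain D E where DE: "S = {D, E}" "D \<subseteq> E" "ofilter r D"
    using assms unfolding cut_points_def by blast
  then have "\<Inter>S = D" "\<Union>S = E" by auto
  then show "ofilter r (\<Inter>S)" "\<Inter>S \<subseteq> \<Union>S" "S = {\<Inter>S, \<Union>S}" using DE by auto
qed

lemma topspace_cut_space [simp]: "topspace cut_space = cut_points"
  unfolding cut_space_def topspace_pullback_topology by simp

lemma inj_on_cut_code: "inj_on cut_code cut_points"
proof
  fix S T assume S: "S \<in> cut_points" and T: "T \<in> cut_points" and "cut_code S = cut_code T"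
  then have "\<Inter>S = \<Inter>T" "\<Union>S = \<Union>T" unfolding cut_code_def by (auto simp: fun_eq_iff)
  then show "S = T" using cut_pointsD(3)[OF S] cut_pointsD(3)[OF T] by simp
qed

lemma cut_code_image:
  "cut_code ` cut_points = {(d, e). (\<forall>a b. d b \<longrightarrow> a \<preceq> b \<longrightarrow> d a) \<and> (\<forall>i. d i \<longrightarrow> e i)}"
proof (intro equalityI subsetI)
  fix x assume "x \<in> cut_code ` cut_points"
  then obtain S where "S \<in> cut_points" "x = cut_code S" by blast
  then show "x \<in> {(d, e). (\<forall>a b. d b \<longrightarrow> a \<preceq> b \<longrightarrow> d a) \<and> (\<forall>i. d i \<longrightarrow> e i)}"
    using cut_pointsD(1,2)[of S] unfolding cut_code_def ofilter_r_iff by auto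
next
  fix x assume "x \<in> {(d, e). (\<forall>a b. d b \<longrightarrow> a \<preceq> b \<longrightarrow> d a) \<and> (\<forall>i. d i \<longrightarrow> e i)}"
  then obtain d e where x: "x = (d, e)"
    and "\<forall>a b. d b \<longrightarrow> a \<preceq> b \<longrightarrow> d a" "\<forall>i. d i \<longrightarrow> e i" by blast
  then have "ofilter r (Collect d)" "Collect d \<subseteq> Collect e" unfolding ofilter_r_iff by auto
  then have "{Collect d, Collect e} \<in> cut_points" by (simp add: doubleton_in_cut_points)
  moreover have "x = cut_code {Collect d, Collect e}"
    using \<open>Collect d \<subseteq> Collect e\<close> unfolding x cut_code_def by auto
  ultimately show "x \<in> cut_code ` cut_points" by (rule rev_image_eqI)
qed

lemma closedin_cut_code_image:
  "closedin (prod_topology cantor_cube cantor_cube) (cut_code ` cut_points)"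
proof -
  let ?Y = "prod_topology cantor_cube cantor_cube :: (('k \<Rightarrow> bool) \<times> ('k \<Rightarrow> bool)) topology"
  let ?C = "\<lambda>I J. {d. (\<forall>i\<in>I. d i) \<and> (\<forall>j\<in>J. \<not> d j)} :: ('k \<Rightarrow> bool) set"
  have C: "openin cantor_cube (?C I J)" if "finite I" "finite J" for I J
    using openin_cantor_cube_conditions[OF that] .
  have "openin ?Y (- cut_code ` cut_points)"
  proof (subst openin_subopen, intro ballI)
    fix x assume "x \<in> - cut_code ` cut_points"
    obtain d e where x: "x = (d, e)" by fastforce
    with \<open>x \<in> - cut_code ` cut_points\<close>
    have "\<not> ((\<forall>a b. d b \<longrightarrow> a \<preceq> b \<longrightarrow> d a) \<and> (\<forall>i. d i \<longrightarrow> e i))"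
      unfolding cut_code_image by auto
    then consider a b where "d b" "a \<preceq> b" "\<not> d a" | i where "d i" "\<not> e i" by blast
    then show "\<exists>T. openin ?Y T \<and> x \<in> T \<and> T \<subseteq> - cut_code ` cut_points"
    proof cases
      case 1
      have "openin ?Y (?C {b} {a} \<times> ?C {} {})"
        using C[of "{b}" "{a}"] C[of "{}" "{}"] by (simp add: openin_prod_Times_iff)
      moreover have "?C {b} {a} \<times> ?C {} {} \<subseteq> - cut_code ` cut_points"
        using 1(2) unfolding cut_code_image by auto
      ultimately show ?thesis using 1 x by auto
    next
      case 2
      have "openin ?Y (?C {i} {} \<times> ?C {} {i})"
        using C[of "{i}" "{}"] C[of "{}" "{i}"] by (simp add: openin_prod_Times_iff)
      moreover have "?C {i} {} \<times> ?C {} {i} \<subseteq> - cut_code ` cut_points"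
        unfolding cut_code_image by auto
      ultimately show ?thesis using 2 x by auto
    qed
  qed
  then show ?thesis unfolding closedin_def by (simp add: Compl_eq_Diff_UNIV)
qed

lemma homeomorphic_map_cut_code:
  "homeomorphic_map cut_space (subtopology (prod_topology cantor_cube cantor_cube) (cut_code ` cut_points)) cut_code"
  unfolding cut_space_def by (rule homeomorphic_map_pullback_topology[OF inj_on_cut_code]) simp

lemma compactum_cut_space: "compactum cut_space"
proof -
  let ?Y = "prod_topology cantor_cube cantor_cube :: (('k \<Rightarrow> bool) \<times> ('k \<Rightarrow> bool)) topology"
  have hom: "cut_space homeomorphic_space subtopology ?Y (cut_code ` cut_points)"
    using homeomorphic_map_cut_code by (rule homeomorphic_map_imp_homeomorphic_space)
  have "compact_space ?Y"
    by (simp add: compact_space_prod_topology compact_space_cantor_cube)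
  then have "compactin ?Y (cut_code ` cut_points)"
    using closedin_cut_code_image by (rule closedin_compact_space)
  then have "compact_space cut_space"
    using homeomorphic_compact_space[OF hom] compact_space_subtopology by blast
  moreover have "Hausdorff_space ?Y"
    by (simp add: Hausdorff_space_prod_topology Hausdorff_space_cantor_cube)
  then have "Hausdorff_space cut_space"
    using homeomorphic_Hausdorff_space[OF hom] Hausdorff_space_subtopology by blast
  ultimately show ?thesis unfolding compactum_def by blast
qed

lemma openin_cut_space_preimage:
  "openin (prod_topology cantor_cube cantor_cube) V \<Longrightarrow> openin cut_space (cut_code -` V \<inter> cut_points)"
  unfolding cut_space_def openin_pullback_topology by blast

lemma openin_box:
  assumes "finite A" "finite B" "finite F" "finite G"
  shows "openin cut_space (box A B F G)"
proof -
  let ?C = "\<lambda>I J. {d. (\<forall>i\<in>I. d i) \<and> (\<forall>j\<in>J. \<not> d j)} :: ('k \<Rightarrow> bool) set"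
  have "box A B F G = cut_code -` (?C A B \<times> ?C F G) \<inter> cut_points"
    unfolding box_def cut_code_def by (auto simp del: Inter_iff Union_iff)
  moreover have "openin (prod_topology cantor_cube cantor_cube) (?C A B \<times> ?C F G)"
    using openin_cantor_cube_conditions[OF assms(1,2)] openin_cantor_cube_conditions[OF assms(3,4)]
    by (simp add: openin_prod_Times_iff)
  ultimately show ?thesis by (simp add: openin_cut_space_preimage)
qed

lemma openin_cut_space_coordinate:
  "openin cut_space {R \<in> cut_points. (i \<in> \<Inter>R) = v}"
  "openin cut_space {R \<in> cut_points. (i \<in> \<Union>R) = v}"
proof -
  have "{R \<in> cut_points. (i \<in> \<Inter>R) = v} = (if v then box {i} {} {} {} else box {} {i} {} {})"
    "{R \<in> cut_points. (i \<in> \<Union>R) = v} = (if v then box {} {} {i} {} else box {} {} {} {i})"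
    unfolding box_def by (auto simp del: Inter_iff Union_iff)
  then show "openin cut_space {R \<in> cut_points. (i \<in> \<Inter>R) = v}"
    "openin cut_space {R \<in> cut_points. (i \<in> \<Union>R) = v}"
    by (simp_all add: openin_box)
qed

lemma totally_disconnected_cut_space: "totally_disconnected_space cut_space"
proof (rule totally_disconnected_space_if_clopen_separated)
  fix S T assume S: "S \<in> topspace cut_space" and T: "T \<in> topspace cut_space" and "S \<noteq> T"
  then have "cut_code S \<noteq> cut_code T" using inj_on_cut_code by (simp add: inj_on_eq_iff)
  then consider i where "(i \<in> \<Inter>S) \<noteq> (i \<in> \<Inter>T)" | i where "(i \<in> \<Union>S) \<noteq> (i \<in> \<Union>T)"
    unfolding cut_code_def prod.inject fun_eq_iff by meson
  then show "\<exists>U. openin cut_space U \<and> openin cut_space (topspace cut_space - U) \<and> S \<in> U \<and> T \<notin> U"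
  proof cases
    case (1 i)
    let ?U = "{R \<in> cut_points. (i \<in> \<Inter>R) = (i \<in> \<Inter>S)}"
    have "topspace cut_space - ?U = {R \<in> cut_points. (i \<in> \<Inter>R) = (i \<notin> \<Inter>S)}"
      by (auto simp del: Inter_iff)
    then have "openin cut_space (topspace cut_space - ?U)" by (simp only: openin_cut_space_coordinate)
    moreover have "S \<in> ?U" "T \<notin> ?U" using S 1 by (simp_all del: Inter_iff)
    ultimately show ?thesis by (intro exI[of _ ?U] conjI openin_cut_space_coordinate)
  next
    case (2 i)
    let ?U = "{R \<in> cut_points. (i \<in> \<Union>R) = (i \<in> \<Union>S)}"
    have "topspace cut_space - ?U = {R \<in> cut_points. (i \<in> \<Union>R) = (i \<notin> \<Union>S)}"
      by (auto simp del: Union_iff)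
    then have "openin cut_space (topspace cut_space - ?U)" by (simp only: openin_cut_space_coordinate)
    moreover have "S \<in> ?U" "T \<notin> ?U" using S 2 by (simp_all del: Union_iff)
    ultimately show ?thesis by (intro exI[of _ ?U] conjI openin_cut_space_coordinate)
  qed
qed

lemma openin_cut_space_contains_box:
  assumes "openin cut_space U" "S \<in> U"
  shows "\<exists>I. finite I \<and> box (I \<inter> \<Inter>S) (I - \<Inter>S) (I \<inter> \<Union>S) (I - \<Union>S) \<subseteq> U"
proof -
  obtain V where V: "openin (prod_topology cantor_cube cantor_cube) V" "U = cut_code -` V \<inter> cut_points"
    using assms(1) unfolding cut_space_def openin_pullback_topology by iprover
  have "((\<lambda>a. a \<in> \<Inter>S), (\<lambda>a. a \<in> \<Union>S)) \<in> V"
    using assms(2) unfolding V(2) by (simp add: cut_code_def)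
  with V(1) obtain V1 V2 where V12: "openin cantor_cube V1" "openin cantor_cube V2"
      "(\<lambda>a. a \<in> \<Inter>S) \<in> V1" "(\<lambda>a. a \<in> \<Union>S) \<in> V2" "V1 \<times> V2 \<subseteq> V"
    unfolding openin_prod_topology_alt by iprover
  obtain I1 where I1: "finite I1" "\<forall>d. (\<forall>i\<in>I1. d i = (i \<in> \<Inter>S)) \<longrightarrow> d \<in> V1"
    using openin_cantor_cube_contains_cylinder[OF V12(1,3)] by iprover
  obtain I2 where I2: "finite I2" "\<forall>d. (\<forall>i\<in>I2. d i = (i \<in> \<Union>S)) \<longrightarrow> d \<in> V2"
    using openin_cantor_cube_contains_cylinder[OF V12(2,4)] by iprover
  let ?I = "I1 \<union> I2"
  have "box (?I \<inter> \<Inter>S) (?I - \<Inter>S) (?I \<inter> \<Union>S) (?I - \<Union>S) \<subseteq> U"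
  proof
    fix R assume "R \<in> box (?I \<inter> \<Inter>S) (?I - \<Inter>S) (?I \<inter> \<Union>S) (?I - \<Union>S)"
    then have R: "R \<in> cut_points" "\<forall>i\<in>?I. (i \<in> \<Inter>R) = (i \<in> \<Inter>S)" "\<forall>i\<in>?I. (i \<in> \<Union>R) = (i \<in> \<Union>S)"
      unfolding box_def by (auto simp del: Inter_iff Union_iff)
    have "(\<lambda>a. a \<in> \<Inter>R) \<in> V1" by (rule I1(2)[rule_format]) (use R(2) in \<open>simp del: Inter_iff\<close>)
    moreover have "(\<lambda>a. a \<in> \<Union>R) \<in> V2" by (rule I2(2)[rule_format]) (use R(3) in \<open>simp del: Union_iff\<close>)
    ultimately have "cut_code R \<in> V1 \<times> V2" by (simp add: cut_code_def)
    with V12(5) have "cut_code R \<in> V" by (rule subsetD)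
    then show "R \<in> U" unfolding V(2) using R(1) by simp
  qed
  then show ?thesis using finite_UnI[OF I1(1) I2(1)] by iprover
qed

section \<open>The top point\<close>

definition top_point :: "'k set set" where
  "top_point = {UNIV}"

abbreviation tail :: "'k \<Rightarrow> 'k set set set" where
  "tail \<alpha> \<equiv> box {\<alpha>} {} {} {}"

lemma mem_tail_iff: "S \<in> tail \<alpha> \<longleftrightarrow> S \<in> cut_points \<and> \<alpha> \<in> \<Inter>S"
  unfolding box_def by (simp del: Inter_iff)

lemma top_point_in_cut_points: "top_point \<in> cut_points"
  using doubleton_in_cut_points[of UNIV UNIV] unfolding top_point_def ofilter_def by simp

lemma Inter_Union_top_point [simp]: "\<Inter>top_point = UNIV" "\<Union>top_point = UNIV"
  unfolding top_point_def by simp_all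

lemma top_point_in_tail: "top_point \<in> tail \<alpha>"
  unfolding mem_tail_iff using top_point_in_cut_points by simp

lemma under_point_in_tail_iff: "{under r a} \<in> tail \<alpha> \<longleftrightarrow> \<alpha> \<preceq> a"
proof -
  have "{under r a} \<in> cut_points"
    using doubleton_in_cut_points[OF order_refl ofilter_under_r] by simp
  then show ?thesis unfolding mem_tail_iff under_def by simp
qed

lemma tail_antimono:
  assumes "\<alpha> \<preceq> a" shows "tail a \<subseteq> tail \<alpha>"
proof
  fix S assume "S \<in> tail a"
  then have S: "S \<in> cut_points" "a \<in> \<Inter>S" by (simp_all add: mem_tail_iff)
  have "\<alpha> \<in> \<Inter>S" using ofilter_r_downward[OF cut_pointsD(1)[OF S(1)] S(2) assms] .
  then show "S \<in> tail \<alpha>" using S(1) by (simp add: mem_tail_iff)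
qed

lemma openin_tail: "openin cut_space (tail \<alpha>)"
  by (simp add: openin_box)

lemma nbhd_top_point_contains_tail:
  assumes "openin cut_space U" "top_point \<in> U"
  shows "\<exists>\<alpha>. tail \<alpha> \<subseteq> U"
proof -
  obtain I where I: "finite I" "box (I \<inter> \<Inter>top_point) (I - \<Inter>top_point) (I \<inter> \<Union>top_point) (I - \<Union>top_point) \<subseteq> U"
    using openin_cut_space_contains_box[OF assms] by iprover
  obtain \<alpha> where \<alpha>: "\<forall>i\<in>I. i \<preceq> \<alpha>"
    using card_less_bounded[OF card_less_finite[OF I(1)]] by iprover
  have "tail \<alpha> \<subseteq> box I {} I {}"
  proof
    fix R assume "R \<in> tail \<alpha>"
    then have R: "R \<in> cut_points" "\<alpha> \<in> \<Inter>R" by (simp_all add: mem_tail_iff)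
    have "i \<in> \<Inter>R" if "i \<in> I" for i
      using cut_pointsD(1)[OF R(1)] R(2) bspec[OF \<alpha> that] by (rule ofilter_r_downward)
    moreover have "i \<in> \<Union>R" if "i \<in> I" for i
      using cut_pointsD(2)[OF R(1)] calculation[OF that] by (rule subsetD)
    ultimately show "R \<in> box I {} I {}" unfolding box_def using R(1) by (simp del: Inter_iff Union_iff)
  qed
  moreover have "box I {} I {} \<subseteq> U" using I(2) by simp
  ultimately show ?thesis by (intro exI) (rule subset_trans)
qed

lemma Inter_nbhds_top_point_contains_tail:
  assumes "|\<A>| <o r" "\<And>W. W \<in> \<A> \<Longrightarrow> openin cut_space W \<and> top_point \<in> W"
  shows "\<exists>a. tail a \<subseteq> \<Inter>\<A>"
proof -
  have "\<forall>W\<in>\<A>. \<exists>\<alpha>. tail \<alpha> \<subseteq> W"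
  proof
    fix W assume "W \<in> \<A>"
    then show "\<exists>\<alpha>. tail \<alpha> \<subseteq> W" using assms(2) nbhd_top_point_contains_tail by simp
  qed
  then obtain f where f: "\<forall>W\<in>\<A>. tail (f W) \<subseteq> W" by (rule bchoice[THEN exE])
  obtain a where a: "\<forall>b\<in>f ` \<A>. b \<preceq> a"
    using card_less_bounded[OF card_less_image[OF assms(1), of f]] by iprover
  have "tail a \<subseteq> W" if "W \<in> \<A>" for W
  proof -
    have "tail a \<subseteq> tail (f W)" using a that by (intro tail_antimono) simp
    then show ?thesis using bspec[OF f that] by (rule subset_trans)
  qed
  then have "tail a \<subseteq> \<Inter>\<A>" by (rule Inter_greatest)
  then show ?thesis by (rule exI)
qed

lemma P_point_top_point: "P_point (UNIV :: 'k set) cut_space top_point"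
  unfolding P_point_def
proof (intro conjI allI impI)
  show "top_point \<in> topspace cut_space" using top_point_in_cut_points by simp
  fix \<A> :: "'k set set set set"
  assume \<A>: "|\<A>| <o |UNIV :: 'k set| \<and> (\<forall>N\<in>\<A>. top_point \<in> cut_space interior_of N)"
  let ?\<B> = "(\<lambda>N. cut_space interior_of N) ` \<A>"
  have "|\<A>| <o r" using \<A> unfolding r_def by (rule conjunct1)
  then have "|?\<B>| <o r" by (rule card_less_image)
  moreover have "openin cut_space W \<and> top_point \<in> W" if "W \<in> ?\<B>" for W
  proof -
    obtain N where "N \<in> \<A>" "W = cut_space interior_of N" using \<open>W \<in> ?\<B>\<close> by (rule imageE)
    then show ?thesis using \<A> by simp
  qed
  ultimately obtain a where a: "tail a \<subseteq> \<Inter>?\<B>"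
    using Inter_nbhds_top_point_contains_tail by iprover
  have "\<Inter>?\<B> \<subseteq> \<Inter>\<A>"
  proof (rule Inter_greatest)
    fix N assume "N \<in> \<A>"
    then have "\<Inter>?\<B> \<subseteq> cut_space interior_of N" by (intro Inter_lower imageI)
    then show "\<Inter>?\<B> \<subseteq> N" using interior_of_subset by (rule subset_trans)
  qed
  with a have "tail a \<subseteq> cut_space interior_of \<Inter>\<A>"
    by (intro interior_of_maximal openin_tail) (rule subset_trans)
  with top_point_in_tail show "top_point \<in> cut_space interior_of \<Inter>\<A>" by (rule subsetD[rotated])
qed

lemma top_point_not_isolated: "\<not> openin cut_space {top_point}"
proof
  assume "openin cut_space {top_point}"
  then obtain \<alpha> where "tail \<alpha> \<subseteq> {top_point}"
    using nbhd_top_point_contains_tail[OF _ singletonI] by iprover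
  moreover have "{under r \<alpha>} \<in> tail \<alpha>" by (simp add: under_point_in_tail_iff)
  ultimately have "{under r \<alpha>} \<in> {top_point}" by (rule subsetD)
  then have "{under r \<alpha>} = top_point" by simp
  then have "under r \<alpha> = UNIV" unfolding top_point_def by simp
  obtain b where "\<alpha> \<preceq> b" "b \<noteq> \<alpha>" using exists_greater by iprover
  moreover have "b \<preceq> \<alpha>" using \<open>under r \<alpha> = UNIV\<close> by (simp add: under_def set_eq_iff)
  ultimately show False using le_r_antisym by blast
qed

section \<open>A \<open>\<kappa>\<^sup>o\<^sup>p\<close>-like base\<close>

text \<open>Nonemptiness and \<open>\<beta> \<in> F \<union> G\<close> are what make this base \<open>\<kappa>\<^sup>o\<^sup>p\<close>-like: the parameters of a
  basic superset of a box are then confined to a set of size \<open>< \<kappa>\<close>.\<close>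

definition cut_base :: "'k set set set set" where
  "cut_base = range tail \<union>
     {box A {\<beta>} F G | A \<beta> F G. finite A \<and> finite F \<and> finite G \<and> \<beta> \<in> F \<union> G \<and> box A {\<beta>} F G \<noteq> {}}"

lemma cut_base_cases:
  assumes "V \<in> cut_base"
  obtains (tail) \<alpha> where "V = tail \<alpha>"
  | (box) A \<beta> F G where "V = box A {\<beta>} F G" "finite A" "finite F" "finite G" "\<beta> \<in> F \<union> G"
      "box A {\<beta>} F G \<noteq> {}"
  using assms unfolding cut_base_def by blast

lemma tail_in_cut_base: "tail \<alpha> \<in> cut_base"
  unfolding cut_base_def by (intro UnI1 rangeI)

lemma box_in_cut_base:
  "finite A \<Longrightarrow> finite F \<Longrightarrow> finite G \<Longrightarrow> \<beta> \<in> F \<union> G \<Longrightarrow> box A {\<beta>} F G \<noteq> {} \<Longrightarrow>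
    box A {\<beta>} F G \<in> cut_base"
  unfolding cut_base_def
  by (rule UnI2, rule CollectI, rule exI[of _ A], rule exI[of _ \<beta>], rule exI[of _ F], rule exI[of _ G]) simp

text \<open>Since \<open>\<Inter>R\<close> is an initial segment, keeping the least ordinal \<open>\<beta>\<close> outside \<open>D\<close> out of it
  keeps all of \<open>I - D\<close> out of it.\<close>

lemma box_exclude_least_subset:
  assumes "\<And>i. i \<notin> D \<Longrightarrow> \<beta> \<preceq> i"
  shows "box (I \<inter> D) {\<beta>} (insert \<beta> I \<inter> E) (insert \<beta> I - E) \<subseteq> box (I \<inter> D) (I - D) (I \<inter> E) (I - E)"
proof
  fix R assume "R \<in> box (I \<inter> D) {\<beta>} (insert \<beta> I \<inter> E) (insert \<beta> I - E)"
  then have R: "R \<in> cut_points" "\<forall>a\<in>I \<inter> D. a \<in> \<Inter>R" "\<beta> \<notin> \<Inter>R"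
      "\<forall>f\<in>insert \<beta> I \<inter> E. f \<in> \<Union>R" "\<forall>g\<in>insert \<beta> I - E. g \<notin> \<Union>R"
    by (simp_all add: mem_box_iff del: Inter_iff Union_iff)
  have "b \<notin> \<Inter>R" if "b \<in> I - D" for b
  proof
    assume "b \<in> \<Inter>R"
    with cut_pointsD(1)[OF R(1)] have "\<beta> \<in> \<Inter>R"
      by (rule ofilter_r_downward) (use that assms in simp)
    with R(3) show False by contradiction
  qed
  then show "R \<in> box (I \<inter> D) (I - D) (I \<inter> E) (I - E)"
    using R unfolding mem_box_iff by (simp del: Inter_iff Union_iff)
qed

lemma cut_space_local_base:
  assumes "openin cut_space U" "S \<in> U"
  shows "\<exists>W\<in>cut_base. S \<in> W \<and> W \<subseteq> U"
proof -
  have S: "S \<in> cut_points" using openin_subset[OF assms(1)] assms(2) by auto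
  define D where "D = \<Inter>S"
  define E where "E = \<Union>S"
  have DE: "D \<subseteq> E" "S = {D, E}" using cut_pointsD(2,3)[OF S] unfolding D_def E_def by auto
  show ?thesis
  proof (cases "D = UNIV")
    case True
    then have "S = top_point" using DE unfolding top_point_def by auto
    then obtain \<alpha> where "tail \<alpha> \<subseteq> U" using nbhd_top_point_contains_tail assms by iprover
    moreover have "S \<in> tail \<alpha>" using top_point_in_tail \<open>S = top_point\<close> by simp
    ultimately show ?thesis using tail_in_cut_base by (intro bexI conjI)
  next
    case False
    obtain I where I: "finite I" "box (I \<inter> D) (I - D) (I \<inter> E) (I - E) \<subseteq> U"
      using openin_cut_space_contains_box[OF assms] unfolding D_def E_def by iprover
    define \<beta> where "\<beta> = wo_rel.minim r (- D)"
    have \<beta>: "\<beta> \<notin> D" using wo_rel.minim_in[OF wo_rel_r, of "- D"] False unfolding \<beta>_def by auto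
    have \<beta>_least: "\<beta> \<preceq> i" if "i \<notin> D" for i
      using wo_rel.minim_least[OF wo_rel_r, of "- D" i] that unfolding \<beta>_def by auto
    let ?W = "box (I \<inter> D) {\<beta>} (insert \<beta> I \<inter> E) (insert \<beta> I - E)"
    have "S \<in> ?W" unfolding mem_box_iff D_def[symmetric] E_def[symmetric] using S \<beta> by auto
    moreover have "?W \<subseteq> U" using box_exclude_least_subset[OF \<beta>_least] I(2) by (rule subset_trans)
    moreover have "?W \<in> cut_base"
    proof (rule box_in_cut_base)
      show "finite (I \<inter> D)" "finite (insert \<beta> I \<inter> E)" "finite (insert \<beta> I - E)"
        "\<beta> \<in> insert \<beta> I \<inter> E \<union> (insert \<beta> I - E)"
        using I(1) by auto
      show "?W \<noteq> {}" using \<open>S \<in> ?W\<close> by blast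
    qed
    ultimately show ?thesis by (intro bexI conjI)
  qed
qed

lemma is_base_cut_base: "is_base cut_space cut_base"
  unfolding is_base_def
proof (intro conjI ballI allI impI)
  fix V assume "V \<in> cut_base"
  then show "openin cut_space V" by (cases rule: cut_base_cases) (simp_all add: openin_box)
next
  fix U assume U: "openin cut_space U"
  show "\<exists>\<U>. \<U> \<subseteq> cut_base \<and> \<Union>\<U> = U"
  proof (intro exI conjI)
    show "{W \<in> cut_base. W \<subseteq> U} \<subseteq> cut_base" by blast
    show "\<Union>{W \<in> cut_base. W \<subseteq> U} = U"
    proof (intro equalityI subsetI)
      fix S assume "S \<in> U"
      then obtain W where "W \<in> cut_base" "S \<in> W" "W \<subseteq> U" using cut_space_local_base[OF U] by blast
      then show "S \<in> \<Union>{W \<in> cut_base. W \<subseteq> U}" by blast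
    qed blast
  qed
qed

lemma supersets_of_tail_in_cut_base: "{V \<in> cut_base. tail \<alpha> \<subseteq> V} \<subseteq> tail ` under r \<alpha>"
proof
  fix V assume "V \<in> {V \<in> cut_base. tail \<alpha> \<subseteq> V}"
  then have V: "V \<in> cut_base" "tail \<alpha> \<subseteq> V" by simp_all
  from V(1) show "V \<in> tail ` under r \<alpha>"
  proof (cases rule: cut_base_cases)
    case (tail \<alpha>')
    have "{under r \<alpha>} \<in> V" using V(2) by (rule subsetD) (simp add: under_point_in_tail_iff)
    then have "\<alpha>' \<preceq> \<alpha>" unfolding tail by (simp only: under_point_in_tail_iff)
    then have "\<alpha>' \<in> under r \<alpha>" by (simp add: under_def)
    then show ?thesis using tail by (rule rev_image_eqI)
  next
    case (box A \<beta> F G)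
    have "top_point \<in> V" using V(2) top_point_in_tail by (rule subsetD)
    then show ?thesis unfolding box(1) by (simp add: mem_box_iff)
  qed
qed

text \<open>Every basic superset of a box contains these two points of it, which confines its
  parameters to \<open>(\<Union>a\<in>A. under r a) \<union> F \<union> G\<close>.\<close>

lemma box_test_points:
  assumes "S \<in> box A {\<beta>} F G"
  defines "D \<equiv> \<Union>a\<in>A. under r a"
  shows "{D, D \<union> F} \<in> box A {\<beta>} F G" "D \<subseteq> - G" "{D, - G} \<in> box A {\<beta>} F G"
proof -
  define D0 where "D0 = \<Inter>S"
  define E0 where "E0 = \<Union>S"
  have S: "ofilter r D0" "D0 \<subseteq> E0" "A \<subseteq> D0" "\<beta> \<notin> D0" "F \<subseteq> E0" "G \<inter> E0 = {}"
    using assms(1) cut_pointsD(1,2)[of S] unfolding D0_def[symmetric] E0_def[symmetric] mem_box_iff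
    by (auto simp del: Inter_iff Union_iff)
  have D: "ofilter r D" unfolding D_def ofilter_r_iff under_def using le_r_trans by blast
  have "A \<subseteq> D" unfolding D_def under_def by auto
  have "D \<subseteq> D0"
  proof
    fix x assume "x \<in> D"
    then obtain a where "a \<in> A" "x \<preceq> a" unfolding D_def under_def by blast
    then show "x \<in> D0" using ofilter_r_downward[OF S(1)] S(3) by blast
  qed
  then have "\<beta> \<notin> D" "D \<union> F \<subseteq> - G" using S by blast+
  then show "D \<subseteq> - G" by blast
  have P1: "\<Inter>{D, D \<union> F} = D" "\<Union>{D, D \<union> F} = D \<union> F" by auto
  have "{D, D \<union> F} \<in> cut_points" using D by (intro doubleton_in_cut_points) auto
  then show "{D, D \<union> F} \<in> box A {\<beta>} F G"
    using \<open>A \<subseteq> D\<close> \<open>\<beta> \<notin> D\<close> \<open>D \<union> F \<subseteq> - G\<close> unfolding mem_box_iff P1 by blast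
  have P2: "\<Inter>{D, - G} = D" "\<Union>{D, - G} = - G" using \<open>D \<subseteq> - G\<close> by auto
  have "{D, - G} \<in> cut_points" using D \<open>D \<subseteq> - G\<close> by (intro doubleton_in_cut_points)
  then show "{D, - G} \<in> box A {\<beta>} F G"
    using \<open>A \<subseteq> D\<close> \<open>\<beta> \<notin> D\<close> \<open>D \<union> F \<subseteq> - G\<close> unfolding mem_box_iff P2 by blast
qed

lemma supersets_of_box_in_cut_base:
  assumes "finite A" "finite F" "finite G" "S \<in> box A {\<beta>} F G"
  defines "T \<equiv> (\<Union>a\<in>A. under r a) \<union> F \<union> G"
  shows "{V \<in> cut_base. box A {\<beta>} F G \<subseteq> V}
    \<subseteq> tail ` T \<union> (\<lambda>(A', b, F', G'). box A' {b} F' G') ` (Fpow T \<times> T \<times> Fpow T \<times> Fpow T)"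
proof
  define D where "D = (\<Union>a\<in>A. under r a)"
  have P: "{D, D \<union> F} \<in> box A {\<beta>} F G" "D \<subseteq> - G" "{D, - G} \<in> box A {\<beta>} F G"
    unfolding D_def by (rule box_test_points[OF assms(4)])+
  have P1: "\<Inter>{D, D \<union> F} = D" "\<Union>{D, D \<union> F} = D \<union> F" by auto
  have P2: "\<Inter>{D, - G} = D" "\<Union>{D, - G} = - G" using P(2) by auto
  fix V assume "V \<in> {V \<in> cut_base. box A {\<beta>} F G \<subseteq> V}"
  then have V: "V \<in> cut_base" "box A {\<beta>} F G \<subseteq> V" by simp_all
  have V1: "{D, D \<union> F} \<in> V" using V(2) P(1) by (rule subsetD)
  have V2: "{D, - G} \<in> V" using V(2) P(3) by (rule subsetD)
  from V(1) show "V \<in> tail ` T \<union> (\<lambda>(A', b, F', G'). box A' {b} F' G') ` (Fpow T \<times> T \<times> Fpow T \<times> Fpow T)"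
  proof (cases rule: cut_base_cases)
    case (tail \<alpha>)
    have "\<alpha> \<in> D" using V1 P1(1) unfolding tail mem_tail_iff by simp
    then have "\<alpha> \<in> T" unfolding T_def D_def by (rule UnI1[THEN UnI1])
    then have "V \<in> tail ` T" using tail by (rule rev_image_eqI)
    then show ?thesis by (rule UnI1)
  next
    case (box A' b F' G')
    have "A' \<subseteq> D" "F' \<subseteq> D \<union> F" "G' \<subseteq> G"
      using V1 V2 P1 P2 unfolding box(1) mem_box_iff by (auto simp del: Inter_iff Union_iff)
    moreover have "D \<union> F \<subseteq> T" "G \<subseteq> T" unfolding T_def D_def by auto
    ultimately have "A' \<subseteq> T" "F' \<subseteq> T" "G' \<subseteq> T" by auto
    moreover have "b \<in> T" using box(5) \<open>F' \<subseteq> T\<close> \<open>G' \<subseteq> T\<close> by blast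
    ultimately have "(A', b, F', G') \<in> Fpow T \<times> T \<times> Fpow T \<times> Fpow T"
      using box(2-4) by (simp add: Fpow_def)
    then have "box A' {b} F' G' \<in> (\<lambda>(A', b, F', G'). box A' {b} F' G') ` (Fpow T \<times> T \<times> Fpow T \<times> Fpow T)"
      by (rule rev_image_eqI) simp
    then show ?thesis unfolding box(1) by (rule UnI2)
  qed
qed

lemma op_like_cut_base: "op_like (UNIV :: 'k set) cut_base"
  unfolding op_like_def r_def[symmetric]
proof
  fix U assume "U \<in> cut_base"
  then show "|{V \<in> cut_base. U \<subseteq> V}| <o r"
  proof (cases rule: cut_base_cases)
    case (tail \<alpha>)
    show ?thesis unfolding tail
      by (rule card_less_subset[OF supersets_of_tail_in_cut_base card_less_image[OF card_less_under]])
  next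
    case (box A \<beta> F G)
    then obtain S where S: "S \<in> box A {\<beta>} F G" by blast
    let ?T = "(\<Union>a\<in>A. under r a) \<union> F \<union> G"
    have T: "|?T| <o r"
      using card_less_UN[OF card_less_finite[OF box(2)] card_less_under]
        card_less_finite[OF box(3)] card_less_finite[OF box(4)]
      by (intro card_less_Un)
    have "|Fpow ?T \<times> ?T \<times> Fpow ?T \<times> Fpow ?T| <o r"
      using card_less_Fpow[OF T] T by (intro card_less_Times)
    then have "|(\<lambda>(A', b, F', G'). box A' {b} F' G') ` (Fpow ?T \<times> ?T \<times> Fpow ?T \<times> Fpow ?T)| <o r"
      by (rule card_less_image)
    then have "|tail ` ?T \<union> (\<lambda>(A', b, F', G'). box A' {b} F' G') ` (Fpow ?T \<times> ?T \<times> Fpow ?T \<times> Fpow ?T)| <o r"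
      by (rule card_less_Un[OF card_less_image[OF T]])
    then show ?thesis unfolding box(1)
      using supersets_of_box_in_cut_base[OF box(2-4) S] by (rule card_less_subset[rotated])
  qed
qed

lemma Nt_eq_cut_space: "Nt_eq cut_space (UNIV :: 'k set)"
  unfolding Nt_eq_def
proof (intro conjI allI impI)
  show "infinite (UNIV :: 'k set)" by (rule infinite_UNIV)
  show "has_op_like_base (UNIV :: 'k set) cut_space"
    unfolding has_op_like_base_def by (intro exI[of _ cut_base] conjI is_base_cut_base op_like_cut_base)
  fix M :: "'k set" assume "M \<subseteq> UNIV \<and> infinite M \<and> |M| <o |UNIV :: 'k set|"
  then have M: "|M| <o |UNIV :: 'k set|" by (elim conjE)
  have "t1_space cut_space"
    using compactum_cut_space unfolding compactum_def by (intro Hausdorff_imp_t1_space) (elim conjE)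
  then show "\<not> has_op_like_base M cut_space"
    using P_point_top_point top_point_not_isolated M by (rule P_point_imp_no_small_op_like_base)
qed

end

theorem theorem3p38:
  assumes "regularCard |UNIV :: 'k set|"
    and "\<not> countable (UNIV :: 'k set)"
  shows "\<exists>(X :: 'k set set topology) p.
           compactum X \<and> totally_disconnected_space X \<and>
           Nt_eq X (UNIV :: 'k set) \<and> P_point (UNIV :: 'k set) X p"
proof -
  interpret regular_uncountable_type "|UNIV :: 'k set|"
    using assms by unfold_locales simp_all
  show ?thesis
    by (intro exI[of _ cut_space] exI[of _ top_point] conjI compactum_cut_space
        totally_disconnected_cut_space Nt_eq_cut_space P_point_top_point)
qed

end
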